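(* Let $q$ be a prime power, $n\ge 2$, $c\in\mathbb{F}_q^*$ and $M=c\,\mathbb{I}_{n\times n}$. Let $\mathcal{B}_n=\{u\in\mathbb{F}_q^n : \langle u,u\rangle=0\}$ and $\nu'_M:\mathcal{B}_n\to\mathbb{F}_q$, $\nu'_M(u)=\langle u,Mu\rangle$. (i) If $q$ is even, then $\mathrm{Num}'_0(c\,\mathbb{I}_{n\times n})_q=\{0\}$ and $\sharp(\nu_M'^{-1}(0))=q^{n-1}$. (ii) Assume $q$ is odd. Then $\mathrm{Num}'_0(c\,\mathbb{I}_{n\times n})_q=\{0\}$ if either $n\ge 3$, or $n=2$ and $q\equiv 1\pmod 4$, while $\mathrm{Num}'_0(c\,\mathbb{I}_{n\times n})_q=\emptyset$ if $n=2$ and $q\equiv -1\pmod 4$. If $n=2s+1$ is odd, then $\sharp(\nu_M'^{-1}(0))=q^{2s}$. If $n=2s$ with either $s$ even or $q\equiv 1\pmod 4$, then $\sharp(\nu_M'^{-1}(0))=q^{2s-1}+q^s-q^{s-1}$. If $n=2s$ with $s$ odd and $q\equiv -1\pmod 4$, then $\sharp(\nu_M'^{-1}(0))=q^{2s-1}-q^s+q^{s-1}$.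
   Context: The Hermitian form is $\langle u,v\rangle=\sum_i u_i^qv_i$; for $u=(x_1,\dots,x_n)\in\mathbb{F}_q^n$ and $M=(m_{ij})$ over $\mathbb{F}_q$, $\langle u,u\rangle=\sum x_i^2$ and $\langle u,Mu\rangle=\sum_{i,j}m_{ij}x_ix_j$. $\mathrm{Num}'_0(M)_q=\{\langle u,Mu\rangle: u\in\mathbb{F}_q^n\setminus\{0\},\ \langle u,u\rangle=0\}$. *)

theory Defs
  imports "HOL-Analysis.Analysis"
begin

text \<open>Vectors in F_q^n are 'a^'n with 'a a finite field (q = CARD('a)), n = CARD('n).
  Hermitian form <u,v> = sum_i u_i^q v_i.\<close>

definition herm :: "'a::{field,finite}^'n \<Rightarrow> 'a^'n \<Rightarrow> 'a" where
  "herm u v = (\<Sum>i\<in>UNIV. (u $ i) ^ CARD('a) * v $ i)"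

definition Num0' :: "'a::{field,finite}^'n^'n \<Rightarrow> 'a set" where
  "Num0' M = {herm u (M *v u) | u. u \<noteq> 0 \<and> herm u u = 0}"

definition Bset :: "('a::{field,finite}^'n) set" where
  "Bset = {u. herm u u = 0}"

definition nu' :: "'a::{field,finite}^'n^'n \<Rightarrow> 'a^'n \<Rightarrow> 'a" where
  "nu' M u = herm u (M *v u)"

definition nu'_preimage :: "'a::{field,finite}^'n^'n \<Rightarrow> 'a \<Rightarrow> ('a^'n) set" where
  "nu'_preimage M a = {u \<in> Bset. nu' M u = a}"

end

theory Submission
  imports Defs
begin

text \<open>For \<open>M = c I\<close> one has \<open>\<langle>u, M u\<rangle> = c \<langle>u, u\<rangle>\<close>, and \<open>\<langle>u, u\<rangle> = \<Sum>i. x\<^sub>i\<^sup>2\<close> because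
  \<open>x\<^sup>q = x\<close> in \<open>\<bbbF>\<^sub>q\<close>. Hence \<open>\<nu>'\<^sub>M\<^sup>-\<^sup>1(0) = \<B>\<^sub>n\<close>, and \<open>Num'\<^sub>0(M)\<close> is \<open>{0}\<close> or \<open>\<emptyset>\<close> according as
  \<open>\<B>\<^sub>n\<close> has a nonzero element or not; everything reduces to counting the solutions
  \<open>N\<^sub>k\<close> of \<open>x\<^sub>1\<^sup>2 + \<dots> + x\<^sub>k\<^sup>2 = 0\<close>.
  In characteristic 2 squaring is bijective, so \<open>N\<^sub>k = q\<^sup>k\<^sup>-\<^sup>1\<close>. For odd \<open>q\<close> every element is a
  sum of two squares and the form \<open>x\<^sup>2 + y\<^sup>2\<close> is multiplicative, so the number \<open>r(b)\<close> of
  representations \<open>x\<^sup>2 + y\<^sup>2 = b\<close> is the same for all \<open>b \<noteq> 0\<close>; with \<open>\<eta> = \<plusminus>1\<close> for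
  \<open>q \<equiv> \<plusminus>1 (mod 4)\<close> one finds \<open>r(0) = q + (q - 1) \<eta>\<close> and \<open>r(1) = q - \<eta>\<close>. Splitting off two
  coordinates gives \<open>N\<^sub>k\<^sub>+\<^sub>2 = q \<eta> N\<^sub>k + (q - \<eta>) q\<^sup>k\<close>, which solves to the stated closed forms.\<close>

lemma card_UNIV_ge_2: "CARD('a::{field,finite}) \<ge> 2"
proof -
  have "card {0::'a, 1} \<le> CARD('a)" by (rule card_mono) auto
  then show ?thesis by simp
qed

lemma power_CARD_eq: "(x::'a::{field,finite}) ^ CARD('a) = x"
proof (cases "x = 0")
  case True
  then show ?thesis using card_UNIV_ge_2[where 'a='a] by simp
next
  case False
  define U where "U = (UNIV::'a set) - {0}"
  have "bij_betw ((*) x) U U"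
    using False by (intro bij_betwI[where g="\<lambda>y. y / x"]) (auto simp: U_def)
  then have "(\<Prod>y\<in>U. x * y) = (\<Prod>y\<in>U. y)"
    by (rule prod.reindex_bij_betw)
  then have "x ^ card U * (\<Prod>y\<in>U. y) = 1 * (\<Prod>y\<in>U. y)"
    by (simp add: prod.distrib)
  moreover have "(\<Prod>y\<in>U. y) \<noteq> 0" by (simp add: U_def)
  ultimately have "x ^ card U = 1" by (rule mult_right_cancel[THEN iffD1, rotated])
  moreover have "CARD('a) = Suc (card U)"
    using card_UNIV_ge_2[where 'a='a] by (simp add: U_def card_Diff_singleton)
  ultimately show ?thesis by simp
qed

lemma even_card_fixpoint_free_involution:
  assumes "finite X" "\<And>x. x \<in> X \<Longrightarrow> h x \<in> X" "\<And>x. x \<in> X \<Longrightarrow> h (h x) = x"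
    "\<And>x. x \<in> X \<Longrightarrow> h x \<noteq> x"
  shows "even (card X)"
  using assms
proof (induction "card X" arbitrary: X rule: less_induct)
  case less
  show ?case
  proof (cases "X = {}")
    case False
    then obtain x where x: "x \<in> X" by blast
    define Y where "Y = X - {x, h x}"
    have "h x \<noteq> x" using less x by auto
    moreover have sub: "{x, h x} \<subseteq> X" using less x by auto
    ultimately have cY: "card X = card Y + 2"
      using card_Diff_subset[OF _ sub] card_mono[OF less(2) sub] by (simp add: Y_def)
    have "even (card Y)"
    proof (rule less(1))
      show "card Y < card X" "finite Y" using cY less(2) by (simp_all add: Y_def)
      fix y assume "y \<in> Y"
      then show "h y \<in> Y" "h (h y) = y" "h y \<noteq> y"
        using less(3-5) x by (auto simp: Y_def) metis+
    qed
    then show ?thesis using cY by simp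
  qed simp
qed

lemma minus_neq_self:
  fixes x :: "'a::field"
  assumes "(2::'a) \<noteq> 0" "x \<noteq> 0"
  shows "- x \<noteq> x"
proof
  assume "- x = x"
  then have "2 * x = 0" by (metis add.left_inverse mult_2)
  with assms show False by simp
qed

lemma two_eq_zero_iff_even_CARD: "(2::'a::{field,finite}) = 0 \<longleftrightarrow> even CARD('a)"
proof
  assume two: "(2::'a) = 0"
  show "even CARD('a)"
  proof (rule even_card_fixpoint_free_involution[where h="\<lambda>x. x + 1"])
    fix x :: 'a
    show "x + 1 + 1 = x" using two by (simp add: add.assoc one_add_one)
  qed simp_all
next
  assume even: "even CARD('a)"
  show "(2::'a) = 0"
  proof (rule ccontr)
    assume two: "(2::'a) \<noteq> 0"
    have "even (card ((UNIV::'a set) - {0}))"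
    proof (rule even_card_fixpoint_free_involution[where h=uminus])
      fix x :: 'a assume "x \<in> UNIV - {0}"
      then show "- x \<noteq> x" using two by (simp add: minus_neq_self)
    qed auto
    then show False using even card_UNIV_ge_2[where 'a='a] by (simp add: card_Diff_singleton)
  qed
qed

lemma card_square_roots:
  assumes "(2::'a::{field,finite}) \<noteq> 0"
  shows "card {x::'a. x\<^sup>2 = d\<^sup>2} = (if d = 0 then 1 else 2)"
proof -
  have "{x::'a. x\<^sup>2 = d\<^sup>2} = {d, -d}" by (auto simp: power2_eq_iff)
  moreover have "d \<noteq> -d" if "d \<noteq> 0"
    using assms that by (rule minus_neq_self[symmetric])
  ultimately show ?thesis by auto
qed

definition nonzero_squares :: "'a::{field,finite} set" where
  "nonzero_squares = {y. y \<noteq> 0 \<and> (\<exists>x. y = x\<^sup>2)}"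

lemma card_nonzero_squares:
  assumes "(2::'a::{field,finite}) \<noteq> 0"
  shows "CARD('a) - 1 = 2 * card (nonzero_squares::'a set)"
proof -
  have "(UNIV::'a set) - {0} = (\<Union>y\<in>nonzero_squares. {x. x\<^sup>2 = y})"
    by (auto simp: nonzero_squares_def)
  then have "card ((UNIV::'a set) - {0}) = (\<Sum>y\<in>nonzero_squares. card {x::'a. x\<^sup>2 = y})"
    by (simp only:) (rule card_UN_disjoint, auto)
  also have "\<dots> = (\<Sum>y\<in>(nonzero_squares::'a set). 2)"
    using card_square_roots[OF assms] by (intro sum.cong) (auto simp: nonzero_squares_def)
  finally show ?thesis by (simp add: card_Diff_singleton)
qed

lemma CARD_mod_4_if_minus_one_square:
  assumes odd: "odd CARD('a::{field,finite})" and i: "(i::'a)\<^sup>2 = -1"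
  shows "CARD('a) mod 4 = 1"
proof -
  obtain m where m: "CARD('a) = Suc (2 * m)" using odd by (metis oddE Suc_eq_plus1)
  have "i \<noteq> 0" using i by auto
  moreover have "i * i ^ (2 * m) = i * 1" using power_CARD_eq[of i] m by simp
  ultimately have "(-1::'a) ^ m = 1" using i by (simp add: power_mult)
  moreover have "(-1::'a) \<noteq> 1"
    using minus_neq_self[of "1::'a"] odd two_eq_zero_iff_even_CARD[where 'a='a] by auto
  ultimately have "even m" by (metis power_minus_odd power_one)
  then show ?thesis using m by (auto elim!: evenE)
qed

text \<open>If \<open>-1\<close> is not a square, inversion has no fixed point on the nonzero squares other than \<open>1\<close>,
  so their number \<open>(q - 1) / 2\<close> is odd.\<close>

lemma minus_one_square_if_CARD_mod_4:
  assumes odd: "odd CARD('a::{field,finite})" and q: "CARD('a) mod 4 = 1"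
  shows "\<exists>i::'a. i\<^sup>2 = -1"
proof (rule ccontr)
  assume no_root: "\<not> (\<exists>i::'a. i\<^sup>2 = -1)"
  have two: "(2::'a) \<noteq> 0" using odd two_eq_zero_iff_even_CARD by blast
  have one: "(1::'a) \<in> nonzero_squares" by (auto simp: nonzero_squares_def intro!: exI[of _ 1])
  have "even (card (nonzero_squares - {1::'a}))"
  proof (rule even_card_fixpoint_free_involution[where h=inverse])
    fix y assume "y \<in> nonzero_squares - {1::'a}"
    then obtain x where x: "y = x\<^sup>2" "y \<noteq> 0" "y \<noteq> 1" by (auto simp: nonzero_squares_def)
    then show "inverse y \<in> nonzero_squares - {1}"
      by (auto simp: nonzero_squares_def power_inverse intro!: exI[of _ "inverse x"])
    show "inverse y \<noteq> y"
    proof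
      assume "inverse y = y"
      then have "y\<^sup>2 = 1\<^sup>2" using x(2) by (metis power2_eq_square right_inverse power_one)
      then have "y = -1" using x(3) by (simp add: power2_eq_1_iff)
      then show False using no_root x(1) by metis
    qed
  qed auto
  moreover have "even (card (nonzero_squares::'a set))"
    using card_nonzero_squares[OF two] q by presburger
  ultimately show False using one by (simp add: card_Diff_singleton card_gt_0_iff)
qed

lemma minus_one_square_iff_CARD_mod_4:
  "odd CARD('a::{field,finite}) \<Longrightarrow> (\<exists>i::'a. i\<^sup>2 = -1) \<longleftrightarrow> CARD('a) mod 4 = 1"
  using CARD_mod_4_if_minus_one_square minus_one_square_if_CARD_mod_4 by blast

text \<open>\<open>\<alpha>\<^sup>2\<close> and \<open>l - \<beta>\<^sup>2\<close> each take \<open>(q + 1) / 2\<close> values, so their value sets meet.\<close>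

lemma sum_two_squares_surj:
  assumes odd: "odd CARD('a::{field,finite})"
  shows "\<exists>\<alpha> \<beta>::'a. \<alpha>\<^sup>2 + \<beta>\<^sup>2 = l"
proof (rule ccontr)
  assume no_rep: "\<not> ?thesis"
  have two: "(2::'a) \<noteq> 0" using odd two_eq_zero_iff_even_CARD by blast
  define A where "A = range (\<lambda>x::'a. x\<^sup>2)"
  define B where "B = (\<lambda>x. l - x) ` A"
  have "A = insert 0 nonzero_squares" by (auto simp: A_def nonzero_squares_def)
  then have cA: "card A = card (nonzero_squares::'a set) + 1"
    by (simp add: nonzero_squares_def)
  have cB: "card B = card A" unfolding B_def by (rule card_image) (auto simp: inj_on_def)
  have "A \<inter> B = {}"
  proof (rule ccontr)
    assume "A \<inter> B \<noteq> {}"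
    then obtain a b where "a\<^sup>2 = l - b\<^sup>2" by (auto simp: A_def B_def)
    then have "a\<^sup>2 + b\<^sup>2 = l" by (simp add: eq_diff_eq)
    with no_rep show False by blast
  qed
  then have "card A + card B \<le> CARD('a)"
    by (metis card_Un_disjoint card_mono finite subset_UNIV)
  then show False using cA cB card_nonzero_squares[OF two] by linarith
qed

definition sq_reps :: "nat \<Rightarrow> 'a::{field,finite} \<Rightarrow> nat" where
  "sq_reps k a = card {xs::'a list. length xs = k \<and> (\<Sum>x\<leftarrow>xs. x\<^sup>2) = a}"

lemma sq_reps_0: "sq_reps 0 a = (if a = 0 then 1 else 0)"
proof -
  have "{xs::'a list. length xs = 0 \<and> (\<Sum>x\<leftarrow>xs. x\<^sup>2) = a} = (if a = 0 then {[]} else {})"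
    by auto
  then show ?thesis by (simp add: sq_reps_def)
qed

lemma sq_reps_Suc: "sq_reps (Suc k) (a::'a::{field,finite}) = (\<Sum>t\<in>UNIV. sq_reps k (a - t\<^sup>2))"
proof -
  let ?S = "SIGMA t:(UNIV::'a set). {xs. length xs = k \<and> (\<Sum>x\<leftarrow>xs. x\<^sup>2) = a - t\<^sup>2}"
  have "{xs. length xs = Suc k \<and> (\<Sum>x\<leftarrow>xs. x\<^sup>2) = a} = (\<lambda>(t, xs). t # xs) ` ?S"
  proof (intro equalityI subsetI)
    fix zs assume "zs \<in> {xs. length xs = Suc k \<and> (\<Sum>x\<leftarrow>xs. x\<^sup>2) = a}"
    then obtain t xs where "zs = t # xs" "length xs = k" "t\<^sup>2 + (\<Sum>x\<leftarrow>xs. x\<^sup>2) = a"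
      by (auto simp: length_Suc_conv)
    then show "zs \<in> (\<lambda>(t, xs). t # xs) ` ?S" by (force simp: eq_diff_eq add.commute)
  qed auto
  moreover have "inj_on (\<lambda>(t, xs). t # xs) ?S" by (auto simp: inj_on_def)
  moreover have "finite {xs::'a list. length xs = k \<and> P xs}" for P
    by (rule finite_subset[OF _ finite_lists_length_eq[of "UNIV::'a set" k]]) auto
  ultimately show ?thesis by (simp add: sq_reps_def card_image)
qed

lemma sum_UNIV_shift:
  "(\<Sum>a\<in>UNIV. f (c - a)) = (\<Sum>a\<in>(UNIV::'a::{ab_group_add,finite} set). f a)"
  "(\<Sum>a\<in>UNIV. f (a - c)) = (\<Sum>a\<in>(UNIV::'a::{ab_group_add,finite} set). f a)"
  by (rule sum.reindex_bij_witness[where i="\<lambda>a. c - a" and j="\<lambda>a. c - a"]; simp)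
     (rule sum.reindex_bij_witness[where i="\<lambda>a. a + c" and j="\<lambda>a. a - c"]; simp)

lemma sum_sq_reps: "(\<Sum>a\<in>UNIV. sq_reps k (a::'a::{field,finite})) = CARD('a) ^ k"
proof (induction k)
  case (Suc k)
  have "(\<Sum>a\<in>UNIV. sq_reps (Suc k) (a::'a)) = (\<Sum>a\<in>UNIV. \<Sum>t\<in>UNIV. sq_reps k ((a::'a) - t\<^sup>2))"
    by (simp only: sq_reps_Suc)
  also have "\<dots> = (\<Sum>t\<in>UNIV. \<Sum>a\<in>UNIV. sq_reps k ((a::'a) - t\<^sup>2))"
    by (rule sum.swap)
  also have "\<dots> = (\<Sum>t\<in>(UNIV::'a set). CARD('a) ^ k)"
    by (simp only: sum_UNIV_shift Suc)
  finally show ?case by simp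
qed (simp add: sq_reps_0)

text \<open>In characteristic 2 squaring is a bijection, so the last square can absorb any value.\<close>

lemma sq_reps_char_2:
  assumes "even CARD('a::{field,finite})"
  shows "sq_reps (Suc k) (a::'a) = CARD('a) ^ k"
proof -
  have "(2::'a) = 0" using assms two_eq_zero_iff_even_CARD by blast
  then have "- u = u" for u :: 'a by (simp add: neg_eq_iff_add_eq_0 mult_2[symmetric])
  then have "inj (\<lambda>t::'a. t\<^sup>2)" by (auto intro!: injI simp: power2_eq_iff)
  then have "bij (\<lambda>t::'a. t\<^sup>2)" by (simp add: finite_UNIV_inj_surj bij_def)
  then have "(\<Sum>t\<in>UNIV. sq_reps k (a - t\<^sup>2)) = (\<Sum>s\<in>(UNIV::'a set). sq_reps k (a - s))"
    by (rule sum.reindex_bij_betw)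
  then show ?thesis by (simp add: sq_reps_Suc sum_UNIV_shift sum_sq_reps)
qed

definition two_sq_reps :: "'a::{field,finite} \<Rightarrow> nat" where
  "two_sq_reps b = card {(x, y). x\<^sup>2 + y\<^sup>2 = (b::'a)}"

lemma sum_sum_squares:
  fixes f :: "'a::{field,finite} \<Rightarrow> 'b::comm_semiring_1"
  shows "(\<Sum>t\<in>UNIV. \<Sum>u\<in>UNIV. f (t\<^sup>2 + u\<^sup>2)) = (\<Sum>b\<in>UNIV. of_nat (two_sq_reps b) * f b)"
proof -
  define g where "g = (\<lambda>(t, u). t\<^sup>2 + u\<^sup>2 :: 'a)"
  have "(\<Sum>t\<in>UNIV. \<Sum>u\<in>UNIV. f (t\<^sup>2 + u\<^sup>2)) = (\<Sum>p\<in>UNIV. f (g p))"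
    by (simp add: sum.cartesian_product g_def case_prod_beta)
  also have "\<dots> = (\<Sum>b\<in>UNIV. \<Sum>p\<in>{p\<in>UNIV. g p = b}. f (g p))"
    by (rule sum.group[symmetric]) auto
  also have "\<dots> = (\<Sum>b\<in>UNIV. of_nat (two_sq_reps b) * f b)"
  proof (intro sum.cong refl)
    fix b
    have "{p\<in>UNIV. g p = b} = {(t, u). t\<^sup>2 + u\<^sup>2 = b}" by (auto simp: g_def)
    then have "(\<Sum>p\<in>{p\<in>UNIV. g p = b}. f (g p)) = (\<Sum>p\<in>{(t, u). t\<^sup>2 + u\<^sup>2 = b}. f b)"
      by (intro sum.cong) (auto simp: g_def)
    then show "(\<Sum>p\<in>{p\<in>UNIV. g p = b}. f (g p)) = of_nat (two_sq_reps b) * f b"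
      by (simp add: two_sq_reps_def)
  qed
  finally show ?thesis .
qed

lemma two_sq_reps_eq_sum: "two_sq_reps (b::'a::{field,finite}) = (\<Sum>t\<in>UNIV. card {u::'a. t\<^sup>2 + u\<^sup>2 = b})"
proof -
  have "{(t, u). t\<^sup>2 + u\<^sup>2 = b} = (SIGMA t:UNIV. {u::'a. t\<^sup>2 + u\<^sup>2 = b})" by auto
  then show ?thesis by (simp add: two_sq_reps_def)
qed

text \<open>Brahmagupta's identity \<open>(\<alpha> x - \<beta> y)\<^sup>2 + (\<beta> x + \<alpha> y)\<^sup>2 = (\<alpha>\<^sup>2 + \<beta>\<^sup>2) (x\<^sup>2 + y\<^sup>2)\<close>.\<close>

lemma two_sq_reps_le_scaled:
  fixes \<alpha> \<beta> b :: "'a::{field,finite}"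
  assumes l: "\<alpha>\<^sup>2 + \<beta>\<^sup>2 \<noteq> 0"
  shows "two_sq_reps b \<le> two_sq_reps ((\<alpha>\<^sup>2 + \<beta>\<^sup>2) * b)"
proof -
  define T where "T = (\<lambda>(x, y). (\<alpha> * x - \<beta> * y, \<beta> * x + \<alpha> * y))"
  have "inj T"
  proof (rule injI)
    fix p p' assume "T p = T p'"
    then have "\<alpha> * fst (T p) + \<beta> * snd (T p) = \<alpha> * fst (T p') + \<beta> * snd (T p')"
              "\<alpha> * snd (T p) - \<beta> * fst (T p) = \<alpha> * snd (T p') - \<beta> * fst (T p')"
      by simp_all
    then have "(\<alpha>\<^sup>2 + \<beta>\<^sup>2) * fst p = (\<alpha>\<^sup>2 + \<beta>\<^sup>2) * fst p'"
              "(\<alpha>\<^sup>2 + \<beta>\<^sup>2) * snd p = (\<alpha>\<^sup>2 + \<beta>\<^sup>2) * snd p'"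
      by (auto simp: T_def case_prod_beta power2_eq_square algebra_simps)
    then show "p = p'" using l by (simp add: prod_eq_iff)
  qed
  moreover have "T ` {(x, y). x\<^sup>2 + y\<^sup>2 = b} \<subseteq> {(x, y). x\<^sup>2 + y\<^sup>2 = (\<alpha>\<^sup>2 + \<beta>\<^sup>2) * b}"
    by (auto simp: T_def power2_eq_square algebra_simps)
  ultimately show ?thesis
    unfolding two_sq_reps_def by (intro card_inj_on_le) (auto intro: inj_on_subset)
qed

lemma two_sq_reps_nonzero:
  assumes odd: "odd CARD('a::{field,finite})" and b0: "(b::'a) \<noteq> 0"
  shows "two_sq_reps b = two_sq_reps (1::'a)"
proof -
  obtain \<alpha> \<beta> :: 'a where ab: "\<alpha>\<^sup>2 + \<beta>\<^sup>2 = b" using sum_two_squares_surj[OF odd] by blast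
  obtain \<gamma> \<delta> :: 'a where cd: "\<gamma>\<^sup>2 + \<delta>\<^sup>2 = inverse b" using sum_two_squares_surj[OF odd] by blast
  show ?thesis
    using two_sq_reps_le_scaled[of \<alpha> \<beta> 1] two_sq_reps_le_scaled[of \<gamma> \<delta> b] ab cd b0 by simp
qed

text \<open>For odd \<open>q\<close>, \<open>chi4 q\<close> is the quadratic character of \<open>-1\<close> in \<open>\<bbbF>\<^sub>q\<close>
  (lemma \<open>minus_one_square_iff_CARD_mod_4\<close>).\<close>

definition chi4 :: "nat \<Rightarrow> int" where
  "chi4 q = (if q mod 4 = 1 then 1 else -1)"

lemma sum_UNIV_if_eq:
  "(\<Sum>t\<in>(UNIV::'a::finite set). if t = z then x else y) = x + (of_nat CARD('a) - 1) * (y::'b::comm_ring_1)"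
proof -
  have "(\<Sum>t\<in>UNIV - {z}. if t = z then x else y) = (\<Sum>t\<in>UNIV - {z}. y)"
    by (rule sum.cong) auto
  then have "(\<Sum>t\<in>(UNIV::'a set). if t = z then x else y) = x + (\<Sum>t\<in>UNIV - {z}. y)"
    by (simp add: sum.remove[of UNIV z])
  then show ?thesis by (simp add: card_Diff_singleton of_nat_diff algebra_simps)
qed

lemma two_sq_reps_0:
  assumes odd: "odd CARD('a::{field,finite})"
  shows "int (two_sq_reps (0::'a)) = int CARD('a) + (int CARD('a) - 1) * chi4 CARD('a)"
proof (cases "\<exists>i::'a. i\<^sup>2 = -1")
  case True
  then obtain i :: 'a where i: "i\<^sup>2 = -1" by blast
  have two: "(2::'a) \<noteq> 0" using odd two_eq_zero_iff_even_CARD by blast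
  have "{u. t\<^sup>2 + u\<^sup>2 = 0} = {u. u\<^sup>2 = (i * t)\<^sup>2}" for t :: 'a
    using i by (auto simp: power_mult_distrib add_eq_0_iff)
  then have "int (card {u. t\<^sup>2 + u\<^sup>2 = 0}) = (if t = 0 then 1 else 2)" for t :: 'a
    using card_square_roots[OF two, of "i * t"] i by auto
  then have "int (two_sq_reps (0::'a)) = (\<Sum>t\<in>(UNIV::'a set). if t = 0 then 1 else 2)"
    by (simp add: two_sq_reps_eq_sum of_nat_sum)
  then show ?thesis
    using True minus_one_square_iff_CARD_mod_4[OF odd] by (simp add: sum_UNIV_if_eq chi4_def)
next
  case False
  have "int (card {u. t\<^sup>2 + u\<^sup>2 = 0}) = (if t = 0 then 1 else 0)" for t :: 'a
  proof -
    have "u = 0" if "t\<^sup>2 + u\<^sup>2 = 0" for u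
    proof (rule ccontr)
      assume "u \<noteq> 0"
      moreover have "t\<^sup>2 = - u\<^sup>2" using that by (simp add: eq_neg_iff_add_eq_0)
      ultimately have "(t / u)\<^sup>2 = -1" by (simp add: power_divide)
      then show False using False by blast
    qed
    then have "{u. t\<^sup>2 + u\<^sup>2 = 0} = (if t = 0 then {0} else {})"
      by (cases "t = 0") fastforce+
    then show ?thesis by simp
  qed
  then have "int (two_sq_reps (0::'a)) = (\<Sum>t\<in>(UNIV::'a set). if t = 0 then 1 else 0)"
    by (simp add: two_sq_reps_eq_sum of_nat_sum)
  then show ?thesis
    using False minus_one_square_iff_CARD_mod_4[OF odd] by (simp add: chi4_def)
qed

lemma sum_UNIV_mult_const_off_zero:
  fixes g h :: "'a::{zero,finite} \<Rightarrow> 'b::comm_ring"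
  assumes "\<And>b. b \<noteq> 0 \<Longrightarrow> g b = c"
  shows "(\<Sum>b\<in>UNIV. g b * h b) = g 0 * h 0 + c * ((\<Sum>b\<in>UNIV. h b) - h 0)"
proof -
  have "(\<Sum>b\<in>UNIV - {0}. g b * h b) = (\<Sum>b\<in>UNIV - {0}. c * h b)"
    using assms by (intro sum.cong) auto
  then have "(\<Sum>b\<in>UNIV. g b * h b) = g 0 * h 0 + (\<Sum>b\<in>UNIV - {0}. c * h b)"
    by (simp add: sum.remove[of UNIV 0])
  then show ?thesis by (simp add: sum.remove[of UNIV 0 h] sum_distrib_left)
qed

lemma sum_two_sq_reps_mult:
  fixes h :: "'a::{field,finite} \<Rightarrow> int"
  assumes odd: "odd CARD('a)"
  shows "(\<Sum>b\<in>UNIV. int (two_sq_reps b) * h b)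
    = int (two_sq_reps (0::'a)) * h 0 + int (two_sq_reps (1::'a)) * ((\<Sum>b\<in>UNIV. h b) - h 0)"
proof -
  have "int (two_sq_reps b) = int (two_sq_reps (1::'a))" if "b \<noteq> 0" for b :: 'a
    using two_sq_reps_nonzero[OF odd that] by (rule arg_cong)
  then show ?thesis by (rule sum_UNIV_mult_const_off_zero[where g="\<lambda>b. int (two_sq_reps b)"])
qed

lemma two_sq_reps_1:
  assumes odd: "odd CARD('a::{field,finite})"
  shows "int (two_sq_reps (1::'a)) = int CARD('a) - chi4 CARD('a)"
proof -
  let ?q = "int CARD('a)"
  have "?q\<^sup>2 = (\<Sum>b\<in>UNIV. int (two_sq_reps (b::'a)) * 1)"
    using sum_sum_squares[of "\<lambda>_::'a. 1::int"] by (simp add: power2_eq_square)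
  also have "\<dots> = int (two_sq_reps (0::'a)) + int (two_sq_reps (1::'a)) * (?q - 1)"
    using sum_two_sq_reps_mult[OF odd, of "\<lambda>_. 1"] by simp
  finally have "(?q - 1) * int (two_sq_reps (1::'a)) = (?q - 1) * (?q - chi4 CARD('a))"
    unfolding two_sq_reps_0[OF odd] by (simp add: power2_eq_square algebra_simps)
  moreover have "?q - 1 \<noteq> 0" using card_UNIV_ge_2[where 'a='a] by simp
  ultimately show ?thesis by simp
qed

text \<open>The first two squares sum to some \<open>b\<close>, which the remaining \<open>k\<close> squares must cancel.\<close>

lemma sq_reps_rec:
  assumes odd: "odd CARD('a::{field,finite})"
  shows "int (sq_reps (Suc (Suc k)) (0::'a)) =
    int CARD('a) * chi4 CARD('a) * int (sq_reps k (0::'a)) + (int CARD('a) - chi4 CARD('a)) * int CARD('a) ^ k"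
proof -
  have "int (sq_reps (Suc (Suc k)) (0::'a)) = (\<Sum>t\<in>UNIV. \<Sum>u\<in>UNIV. int (sq_reps k (- ((t::'a)\<^sup>2 + u\<^sup>2))))"
    by (simp add: sq_reps_Suc diff_diff_eq of_nat_sum)
  also have "\<dots> = (\<Sum>b\<in>UNIV. int (two_sq_reps (b::'a)) * int (sq_reps k (- b)))"
    by (rule sum_sum_squares)
  also have "\<dots> = int (two_sq_reps (0::'a)) * int (sq_reps k (0::'a))
      + int (two_sq_reps (1::'a)) * ((\<Sum>b\<in>UNIV. int (sq_reps k (- (b::'a)))) - int (sq_reps k (0::'a)))"
    using sum_two_sq_reps_mult[OF odd, of "\<lambda>b. int (sq_reps k (- b))"] by simp
  also have "(\<Sum>b\<in>UNIV. int (sq_reps k (- (b::'a)))) = int CARD('a) ^ k"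
    using sum_UNIV_shift(1)[of "\<lambda>b. int (sq_reps k b)" "0::'a"] sum_sq_reps[of k, where 'a='a]
    by (simp flip: of_nat_sum)
  finally show ?thesis
    unfolding two_sq_reps_0[OF odd] two_sq_reps_1[OF odd] by (simp add: algebra_simps)
qed

lemma sq_reps_odd:
  assumes "odd CARD('a::{field,finite})"
  shows "int (sq_reps (2 * s + 1) (0::'a)) = int CARD('a) ^ (2 * s)"
proof (induction s)
  case (Suc s)
  have "int (sq_reps (2 * Suc s + 1) (0::'a)) = int (sq_reps (Suc (Suc (2 * s + 1))) (0::'a))" by simp
  also have "\<dots> = int CARD('a) ^ (2 * Suc s)"
    unfolding sq_reps_rec[OF assms] Suc by (simp add: algebra_simps)
  finally show ?case .
qed (simp add: sq_reps_Suc sq_reps_0)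

lemma sq_reps_even:
  assumes "odd CARD('a::{field,finite})"
  shows "int (sq_reps (2 * Suc r) (0::'a)) = int CARD('a) ^ (2 * r + 1)
    + chi4 CARD('a) ^ Suc r * (int CARD('a) ^ Suc r - int CARD('a) ^ r)"
proof (induction r)
  case 0
  show ?case using sq_reps_rec[OF assms, of 0] by (simp add: sq_reps_0 algebra_simps)
next
  case (Suc r)
  have "int (sq_reps (2 * Suc (Suc r)) (0::'a)) = int (sq_reps (Suc (Suc (2 * Suc r))) (0::'a))" by simp
  also have "\<dots> = int CARD('a) ^ (2 * Suc r + 1)
      + chi4 CARD('a) ^ Suc (Suc r) * (int CARD('a) ^ Suc (Suc r) - int CARD('a) ^ Suc r)"
    unfolding sq_reps_rec[OF assms] Suc by (simp add: algebra_simps)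
  finally show ?case .
qed

lemma sq_reps_0_eq_1_iff:
  assumes odd: "odd CARD('a::{field,finite})" and "k \<ge> 2"
  shows "sq_reps k (0::'a) = 1 \<longleftrightarrow> k = 2 \<and> CARD('a) mod 4 = 3"
proof -
  define q where "q = int CARD('a)"
  have q: "q \<ge> 2" using card_UNIV_ge_2[where 'a='a] by (simp add: q_def)
  have "CARD('a) mod 4 = 1 \<or> CARD('a) mod 4 = 3" using odd by presburger
  then have chi4: "chi4 CARD('a) = (if CARD('a) mod 4 = 3 then -1 else 1)" by (auto simp: chi4_def)
  consider s where "k = 2 * s + 1" "s \<ge> 1" | "k = 2" | r where "k = 2 * Suc r" "r \<ge> 1"
  proof (cases "even k")
    case True
    then obtain m where "k = 2 * m" by blast
    with \<open>k \<ge> 2\<close> show ?thesis using that(2) that(3)[of "m - 1"] by (cases "m = 1") auto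
  next
    case False
    then obtain s where "k = 2 * s + 1" by (blast elim: oddE)
    with \<open>k \<ge> 2\<close> show ?thesis using that(1) by auto
  qed
  then show ?thesis
  proof cases
    case (1 s)
    have "q ^ 1 < q ^ (2 * s)" using q 1 by (intro power_strict_increasing) auto
    moreover have "int (sq_reps k (0::'a)) = q ^ (2 * s)"
      using sq_reps_odd[OF odd, of s] 1 by (simp add: q_def)
    ultimately have "int (sq_reps k (0::'a)) \<noteq> 1" using q by simp
    then show ?thesis using 1 by auto
  next
    case 2
    then show ?thesis using sq_reps_even[OF odd, of 0] q unfolding q_def
      by (cases "CARD('a) mod 4 = 3") (auto simp: chi4)
  next
    case (3 r)
    define e where "e = chi4 CARD('a) ^ Suc r"
    have N: "int (sq_reps k (0::'a)) = q ^ (2 * r + 1) + e * (q ^ Suc r - q ^ r)"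
      using sq_reps_even[OF odd, of r] 3 by (simp add: q_def e_def)
    have "q ^ Suc r \<le> q ^ (2 * r + 1)" "q ^ r \<le> q ^ Suc r"
      using q by (intro power_increasing; simp)+
    moreover have "q \<le> q ^ r" using power_increasing[of 1 r q] q 3 by simp
    moreover have "e * (q ^ Suc r - q ^ r) \<ge> - (q ^ Suc r - q ^ r)"
      using \<open>q ^ r \<le> q ^ Suc r\<close> by (auto simp: e_def chi4 minus_one_power_iff)
    ultimately have "int (sq_reps k (0::'a)) \<noteq> 1" using N q by linarith
    then show ?thesis using 3 by auto
  qed
qed

lemma card_vec_sum_eq_card_lists:
  fixes g :: "'b \<Rightarrow> 'c::comm_monoid_add"
  shows "card {u::'b^'n. (\<Sum>i\<in>UNIV. g (u $ i)) = a}
    = card {xs. length xs = CARD('n) \<and> (\<Sum>x\<leftarrow>xs. g x) = a}"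
proof -
  obtain h where h: "bij_betw h {0..<CARD('n)} (UNIV::'n set)"
    using ex_bij_betw_nat_finite[of "UNIV::'n set"] by auto
  define L where "L = (\<lambda>u::'b^'n. map (\<lambda>k. u $ h k) [0..<CARD('n)])"
  have sum_L: "(\<Sum>x\<leftarrow>L u. g x) = (\<Sum>i\<in>UNIV. g (u $ i))" for u
    using sum.reindex_bij_betw[OF h, of "\<lambda>i. g (u $ i)"]
    by (simp add: L_def o_def sum_list_sum_nth atLeast0LessThan)
  have "inj L"
  proof (rule injI)
    fix u v assume "L u = L v"
    then have eq: "u $ h k = v $ h k" if "k < CARD('n)" for k
      using that by (simp add: L_def map_eq_conv)
    show "u = v" unfolding vec_eq_iff
    proof
      fix i :: 'n
      obtain k where "k < CARD('n)" "i = h k" using bij_betw_imp_surj_on[OF h] by force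
      then show "u $ i = v $ i" using eq by simp
    qed
  qed
  moreover have "{xs. length xs = CARD('n) \<and> (\<Sum>x\<leftarrow>xs. g x) = a} = L ` {u. (\<Sum>i\<in>UNIV. g (u $ i)) = a}"
  proof (intro equalityI subsetI)
    fix xs :: "'b list" assume xs: "xs \<in> {xs. length xs = CARD('n) \<and> (\<Sum>x\<leftarrow>xs. g x) = a}"
    define u where "u = (\<chi> j. xs ! inv_into {0..<CARD('n)} h j)"
    have "L u = xs"
      using xs h by (auto simp: L_def u_def bij_betw_def intro!: nth_equalityI)
    then show "xs \<in> L ` {u. (\<Sum>i\<in>UNIV. g (u $ i)) = a}" using xs sum_L[of u] by auto
  qed (auto simp: L_def sum_L[symmetric])
  ultimately show ?thesis by (simp add: card_image inj_on_subset)
qed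

lemma herm_self: "herm u u = (\<Sum>i\<in>UNIV. ((u::'a::{field,finite}^'n) $ i)\<^sup>2)"
  by (simp add: herm_def power_CARD_eq power2_eq_square)

lemma herm_mat: "herm u (mat c *v u) = c * herm (u::'a::{field,finite}^'n) u"
proof -
  have "mat c *v u = c *s u"
    by (simp add: vec_eq_iff matrix_vector_mult_def mat_def if_distrib if_distribR cong: if_cong)
  then show ?thesis by (simp add: herm_def sum_distrib_left mult_ac)
qed

lemma card_Bset: "card (Bset::('a::{field,finite}^'n) set) = sq_reps CARD('n) (0::'a)"
  unfolding Bset_def herm_self sq_reps_def by (rule card_vec_sum_eq_card_lists)

lemma nu'_preimage_mat_0:
  "(c::'a::{field,finite}) \<noteq> 0 \<Longrightarrow> nu'_preimage (mat c) 0 = (Bset::('a^'n) set)"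
  by (auto simp: nu'_preimage_def nu'_def herm_mat Bset_def)

lemma Num0'_mat:
  assumes "(c::'a::{field,finite}) \<noteq> 0"
  shows "Num0' (mat c :: 'a^'n^'n) = (if card (Bset::('a^'n) set) = 1 then {} else {0})"
proof -
  have zero: "(0::'a^'n) \<in> Bset" by (simp add: Bset_def herm_def)
  have "Num0' (mat c :: 'a^'n^'n) = (\<lambda>_. 0) ` ((Bset::('a^'n) set) - {0})"
    by (auto simp: Num0'_def herm_mat Bset_def)
  moreover have "card (Bset::('a^'n) set) = card ((Bset::('a^'n) set) - {0}) + 1"
    using card_Suc_Diff1[OF finite zero] by simp
  then have "card (Bset::('a^'n) set) = 1 \<longleftrightarrow> (Bset::('a^'n) set) - {0} = {}"
    by simp
  ultimately show ?thesis by (simp add: image_constant_conv)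
qed

theorem proposition7:
  fixes c :: "'a::{field,finite}" and M :: "'a^'n^'n"
  assumes n2: "CARD('n) \<ge> 2" and c0: "c \<noteq> 0" and M: "M = mat c"
  shows "(even CARD('a) \<longrightarrow>
            Num0' M = {0} \<and> card (nu'_preimage M 0) = CARD('a) ^ (CARD('n) - 1))
       \<and> (odd CARD('a) \<longrightarrow>
            ((CARD('n) \<ge> 3 \<or> (CARD('n) = 2 \<and> CARD('a) mod 4 = 1)) \<longrightarrow> Num0' M = {0})
          \<and> ((CARD('n) = 2 \<and> CARD('a) mod 4 = 3) \<longrightarrow> Num0' M = {})
          \<and> (\<forall>s. CARD('n) = 2 * s + 1 \<longrightarrow>
                 int (card (nu'_preimage M 0)) = int (CARD('a)) ^ (2 * s))
          \<and> (\<forall>s. CARD('n) = 2 * s \<and> (even s \<or> CARD('a) mod 4 = 1) \<longrightarrow>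
                 int (card (nu'_preimage M 0)) =
                   int (CARD('a)) ^ (2 * s - 1) + int (CARD('a)) ^ s - int (CARD('a)) ^ (s - 1))
          \<and> (\<forall>s. CARD('n) = 2 * s \<and> odd s \<and> CARD('a) mod 4 = 3 \<longrightarrow>
                 int (card (nu'_preimage M 0)) =
                   int (CARD('a)) ^ (2 * s - 1) - int (CARD('a)) ^ s + int (CARD('a)) ^ (s - 1)))"
proof -
  let ?B = "Bset :: ('a^'n) set" and ?q = "int CARD('a)"
  have pre: "nu'_preimage M 0 = ?B" using c0 by (simp add: M nu'_preimage_mat_0)
  have Num: "Num0' M = (if card ?B = 1 then {} else {0})" using c0 by (simp add: M Num0'_mat)
  have B: "card ?B = sq_reps CARD('n) (0::'a)" by (rule card_Bset)
  show ?thesis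
  proof (intro conjI impI allI)
    assume "even CARD('a)"
    moreover have "Suc (CARD('n) - 1) = CARD('n)" using n2 by simp
    ultimately have "card ?B = CARD('a) ^ (CARD('n) - 1)"
      using B sq_reps_char_2[of "CARD('n) - 1" 0] by simp
    then show "card (nu'_preimage M 0) = CARD('a) ^ (CARD('n) - 1)" "Num0' M = {0}"
      using pre Num n2 card_UNIV_ge_2[where 'a='a] by (simp_all add: power_eq_1_iff)
  next
    assume odd: "odd CARD('a)"
    have even_n: "int (card ?B) = ?q ^ (2 * s - 1) + chi4 CARD('a) ^ s * (?q ^ s - ?q ^ (s - 1))"
      if "CARD('n) = 2 * s" for s
      using B sq_reps_even[OF odd, of "s - 1"] that n2 by (cases s) auto
    show "Num0' M = {0}" if "CARD('n) \<ge> 3 \<or> (CARD('n) = 2 \<and> CARD('a) mod 4 = 1)"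
      using Num B sq_reps_0_eq_1_iff[OF odd n2] that by auto
    show "Num0' M = {}" if "CARD('n) = 2 \<and> CARD('a) mod 4 = 3"
      using Num B sq_reps_0_eq_1_iff[OF odd n2] that by auto
    show "int (card (nu'_preimage M 0)) = ?q ^ (2 * s)" if "CARD('n) = 2 * s + 1" for s
      using pre B sq_reps_odd[OF odd, of s] that by simp
    show "int (card (nu'_preimage M 0)) = ?q ^ (2 * s - 1) + ?q ^ s - ?q ^ (s - 1)"
      if "CARD('n) = 2 * s \<and> (even s \<or> CARD('a) mod 4 = 1)" for s
      using pre even_n[of s] that by (auto simp: chi4_def)
    show "int (card (nu'_preimage M 0)) = ?q ^ (2 * s - 1) - ?q ^ s + ?q ^ (s - 1)"
      if "CARD('n) = 2 * s \<and> odd s \<and> CARD('a) mod 4 = 3" for s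
      using pre even_n[of s] that by (simp add: chi4_def)
  qed
qed

end
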